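(* For every $n\in\mathbb{N}$, $A_n(p,q,t)=A_n(q,p,t)$, where $$A_n(p,q,t)=\sum_{\pi\in\mathfrak{S}_n}p^{(13\text{-}2)(\pi)}q^{(2\text{-}31)(\pi)}t^{\operatorname{des}(\pi)}.$$
   Context: For $\pi=a_1\cdots a_n\in\mathfrak{S}_n$: $\operatorname{des}(\pi)=|\{i\in[n-1]:a_i>a_{i+1}\}|$; $(2\text{-}31)(\pi)$ is the number of pairs $1\le i<j\le n-1$ with $a_{j+1}<a_i<a_j$; $(13\text{-}2)(\pi)$ is the number of pairs $2\le i<j\le n$ with $a_{i-1}<a_j<a_i$. *)

theory Defs
  imports "HOL-Combinatorics.Multiset_Permutations"
begin

(* A permutation pi = a_1 ... a_n of [n] = {1..n} is represented as the list
   [a_1, ..., a_n]; positions are 1-based in the paper, so a_i = pi ! (i - 1). *)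

definition perms :: "nat \<Rightarrow> nat list set" where
  "perms n = permutations_of_set {1..n}"

definition des :: "nat list \<Rightarrow> nat" where
  "des \<pi> = card {i \<in> {1..length \<pi> - 1}. \<pi> ! (i - 1) > \<pi> ! i}"

definition pat_2_31 :: "nat list \<Rightarrow> nat" where
  "pat_2_31 \<pi> = card {(i, j). 1 \<le> i \<and> i < j \<and> j \<le> length \<pi> - 1 \<and>
      \<pi> ! j < \<pi> ! (i - 1) \<and> \<pi> ! (i - 1) < \<pi> ! (j - 1)}"

definition pat_13_2 :: "nat list \<Rightarrow> nat" where
  "pat_13_2 \<pi> = card {(i, j). 2 \<le> i \<and> i < j \<and> j \<le> length \<pi> \<and>
      \<pi> ! (i - 2) < \<pi> ! (j - 1) \<and> \<pi> ! (j - 1) < \<pi> ! (i - 1)}"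

definition A_poly :: "nat \<Rightarrow> 'a::comm_semiring_1 \<Rightarrow> 'a \<Rightarrow> 'a \<Rightarrow> 'a" where
  "A_poly n p q t = (\<Sum>\<pi>\<in>perms n. p ^ pat_13_2 \<pi> * q ^ pat_2_31 \<pi> * t ^ des \<pi>)"

end

theory Submission
  imports Defs
begin

(* Frame a permutation pi of [n] as the word 0 pi 0. More generally, consider words
   0 B_1 0 B_2 ... 0 B_r 0 whose nonempty blocks B_i together list each of 1, ..., k once,
   and give each letter v the weight p^a q^b t^c, where a (resp. b) counts the adjacent pairs
   to the left (resp. right) of v forming a 13-2 (resp. 2-31) pattern with v, the separator 0
   acting as a letter larger than all others, and c = 1 iff v is followed by a smaller letter.
   For 0 pi 0 the product of these weights is p^(13-2) q^(2-31) t^des.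

   Every such word on [k+1] arises exactly once by inserting k+1 at one of the zeros of a word
   on [k], keeping that zero on the left of k+1, on the right, on both sides, or on neither.
   The weights of the old letters do not change, and if i of the z zeros precede the insertion
   point, the new letter gets weight p^(i - [no zero left]) q^(z - 1 - i - [no zero right])
   t^[no zero right]. Summing over i produces (p,q)-integers, which are symmetric in p and q.
   Hence, by induction on k, the generating function of these words refined by the number of
   zeros is symmetric in p and q, and A_n(p,q,t) is its part with exactly two zeros. *)

section \<open>Adjacent pairs and splittings of lists\<close>

fun count_adj :: "('a \<Rightarrow> 'a \<Rightarrow> bool) \<Rightarrow> 'a list \<Rightarrow> nat" where
  "count_adj P (x # y # zs) = of_bool (P x y) + count_adj P (y # zs)"
| "count_adj P _ = 0"

lemma count_adj_Cons:
  "count_adj P (x # xs) = of_bool (xs \<noteq> [] \<and> P x (hd xs)) + count_adj P xs"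
  by (cases xs) auto

lemma count_adj_append:
  "count_adj P (xs @ ys) =
     count_adj P xs + count_adj P ys + of_bool (xs \<noteq> [] \<and> ys \<noteq> [] \<and> P (last xs) (hd ys))"
  by (induction xs) (auto simp: count_adj_Cons)

lemma count_adj_cong:
  "(\<And>x y. x \<in> set xs \<Longrightarrow> y \<in> set xs \<Longrightarrow> P x y \<longleftrightarrow> Q x y) \<Longrightarrow> count_adj P xs = count_adj Q xs"
  by (induction xs) (auto simp: count_adj_Cons)

lemma count_adj_eq_0:
  "(\<And>x y. x \<in> set xs \<Longrightarrow> y \<in> set xs \<Longrightarrow> \<not> P x y) \<Longrightarrow> count_adj P xs = 0"
  by (induction xs) (auto simp: count_adj_Cons)

lemma count_adj_collapse:
  assumes "r \<noteq> []" "\<not> P z z" "\<And>x y. x \<in> set r \<Longrightarrow> P x y = P z y \<and> P y x = P y z"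
  shows "count_adj P (xs @ r @ ys) = count_adj P (xs @ z # ys)"
proof -
  have "\<not> P x y" if "x \<in> set r" "y \<in> set r" for x y
    using assms(3)[OF that(1), of y] assms(3)[OF that(2), of z] assms(2) by simp
  then have "count_adj P r = 0"
    by (rule count_adj_eq_0)
  with assms(1,3) show ?thesis
    by (simp add: count_adj_append count_adj_Cons)
qed

lemma count_adj_enter_count_list:
  "successively (\<lambda>x y. x \<noteq> c \<or> y \<noteq> c) xs \<Longrightarrow>
   count_adj (\<lambda>x y. x \<noteq> c \<and> y = c) xs + of_bool (xs \<noteq> [] \<and> hd xs = c) = count_list xs c"
  by (induction xs rule: induct_list012) auto

lemma count_adj_leave_count_list:
  "successively (\<lambda>x y. x \<noteq> c \<or> y \<noteq> c) xs \<Longrightarrow>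
   count_adj (\<lambda>x y. x = c \<and> y \<noteq> c) xs + of_bool (xs \<noteq> [] \<and> last xs = c) = count_list xs c"
  by (induction xs rule: induct_list012) auto

lemma count_adj_conv_card:
  "count_adj P xs = card {i. Suc i < length xs \<and> P (xs ! i) (xs ! Suc i)}"
proof -
  have "count_adj P xs = length (filter (\<lambda>(x, y). P x y) (zip xs (tl xs)))"
    by (induction P xs rule: count_adj.induct) auto
  also have "\<dots> = card {i. Suc i < length xs \<and> P (xs ! i) (xs ! Suc i)}"
    unfolding length_filter_conv_card by (rule arg_cong[where f = card]) (auto simp: nth_tl)
  finally show ?thesis .
qed

lemma count_adj_take:
  "count_adj P (take m xs) = card {i. Suc i < m \<and> Suc i < length xs \<and> P (xs ! i) (xs ! Suc i)}"
  unfolding count_adj_conv_card by (auto intro: arg_cong[where f = card])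

lemma count_adj_drop:
  "count_adj P (drop m xs) = card {i. m \<le> i \<and> Suc i < length xs \<and> P (xs ! i) (xs ! Suc i)}"
proof -
  have "{i. m \<le> i \<and> Suc i < length xs \<and> P (xs ! i) (xs ! Suc i)} =
      (+) m ` {i. Suc i < length (drop m xs) \<and> P (drop m xs ! i) (drop m xs ! Suc i)}"
  proof (intro set_eqI iffI)
    fix i assume "i \<in> {i. m \<le> i \<and> Suc i < length xs \<and> P (xs ! i) (xs ! Suc i)}"
    then show "i \<in> (+) m ` {i. Suc i < length (drop m xs) \<and> P (drop m xs ! i) (drop m xs ! Suc i)}"
      by (intro image_eqI[of _ _ "i - m"]) auto
  qed auto
  then show ?thesis
    by (simp add: count_adj_conv_card card_image)
qed

definition splits_at :: "'a \<Rightarrow> 'a list \<Rightarrow> ('a list \<times> 'a list) set" where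
  "splits_at x w = {(a, b). w = a @ x # b}"

lemma count_list_less_of_longer_prefix:
  "a1 @ x # b1 = a2 @ x # b2 \<Longrightarrow> length a1 < length a2 \<Longrightarrow> count_list a1 x < count_list a2 x"
proof (induction a1 arbitrary: a2)
  case Nil
  then show ?case by (cases a2) auto
next
  case (Cons y a1)
  then show ?case by (cases a2) auto
qed

lemma exists_split_at_count:
  "i < count_list w x \<Longrightarrow> \<exists>a b. w = a @ x # b \<and> count_list a x = i"
proof (induction w arbitrary: i)
  case (Cons y w)
  show ?case
  proof (cases "y = x")
    case True
    show ?thesis
    proof (cases i)
      case 0
      with True show ?thesis
        by (intro exI[of _ "[]"] exI[of _ w]) simp
    next
      case (Suc j)
      with Cons.prems True obtain a b where "w = a @ x # b" "count_list a x = j"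
        using Cons.IH[of j] by auto
      with True Suc show ?thesis
        by (intro exI[of _ "y # a"] exI[of _ b]) simp
    qed
  next
    case False
    with Cons.prems obtain a b where "w = a @ x # b" "count_list a x = i"
      using Cons.IH[of i] by auto
    with False show ?thesis
      by (intro exI[of _ "y # a"] exI[of _ b]) simp
  qed
qed simp

lemma bij_betw_splits_at:
  "bij_betw (\<lambda>(a, b). count_list a x) (splits_at x w) {..<count_list w x}"
proof (rule bij_betw_imageI)
  show "inj_on (\<lambda>(a, b). count_list a x) (splits_at x w)"
  proof (rule inj_onI)
    fix s1 s2
    assume in_splits: "s1 \<in> splits_at x w" "s2 \<in> splits_at x w"
      and cnt: "(\<lambda>(a, b). count_list a x) s1 = (\<lambda>(a, b). count_list a x) s2"
    obtain a1 b1 a2 b2 where s: "s1 = (a1, b1)" "s2 = (a2, b2)"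
      by (cases s1, cases s2)
    with in_splits have eq: "a1 @ x # b1 = a2 @ x # b2"
      by (simp add: splits_at_def)
    have "\<not> length a1 < length a2" "\<not> length a2 < length a1"
      using count_list_less_of_longer_prefix[OF eq] count_list_less_of_longer_prefix[OF eq [symmetric]] cnt s
      by auto
    with eq s show "s1 = s2"
      by simp
  qed
  show "(\<lambda>(a, b). count_list a x) ` splits_at x w = {..<count_list w x}"
  proof
    show "(\<lambda>(a, b). count_list a x) ` splits_at x w \<subseteq> {..<count_list w x}"
    proof
      fix i assume "i \<in> (\<lambda>(a, b). count_list a x) ` splits_at x w"
      then obtain a b where "(a, b) \<in> splits_at x w" "i = count_list a x"
        by auto
      then show "i \<in> {..<count_list w x}"
        by (simp add: splits_at_def)
    qed
    show "{..<count_list w x} \<subseteq> (\<lambda>(a, b). count_list a x) ` splits_at x w"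
    proof
      fix i assume "i \<in> {..<count_list w x}"
      then obtain a b where "w = a @ x # b" "count_list a x = i"
        using exists_split_at_count[of i w x] by auto
      then show "i \<in> (\<lambda>(a, b). count_list a x) ` splits_at x w"
        by (intro image_eqI[of _ _ "(a, b)"]) (simp_all add: splits_at_def)
    qed
  qed
qed

lemma finite_splits_at: "finite (splits_at x w)"
  using bij_betw_finite[OF bij_betw_splits_at] by simp

section \<open>Segmented permutations and insertion of a new maximum\<close>

definition seg_perms :: "nat \<Rightarrow> nat list set" where
  "seg_perms k = {w. w \<noteq> [] \<and> hd w = 0 \<and> last w = 0 \<and> successively (\<lambda>x y. x \<noteq> 0 \<or> y \<noteq> 0) w \<and>
     distinct (filter (\<lambda>x. x \<noteq> 0) w) \<and> set w = {0..k}}"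

(* The letter m goes where the zero between a and b was; l and r record whether that zero is
   kept immediately to the left and to the right of m, so it may also be duplicated or dropped. *)
definition ins_top :: "nat \<Rightarrow> (nat list \<times> nat list) \<times> bool \<times> bool \<Rightarrow> nat list" where
  "ins_top m = (\<lambda>((a, b), l, r). a @ (if l then [0] else []) @ m # (if r then [0] else []) @ b)"

definition ins_choices :: "nat list \<Rightarrow> ((nat list \<times> nat list) \<times> bool \<times> bool) set" where
  "ins_choices w = {((a, b), l, r). (a, b) \<in> splits_at 0 w \<and> (l \<or> a \<noteq> []) \<and> (r \<or> b \<noteq> [])}"

lemma seg_perms_splitD:
  assumes "w \<in> seg_perms k" "w = a @ 0 # b"
  shows "set a \<subseteq> {0..k}" "set b \<subseteq> {0..k}"
    "a = [] \<or> hd a = 0 \<and> last a \<noteq> 0" "b = [] \<or> last b = 0 \<and> hd b \<noteq> 0"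
  using assms by (auto simp: seg_perms_def successively_append_iff successively_Cons)

lemma split_trailing:
  assumes "successively (\<lambda>x y. x \<noteq> c \<or> y \<noteq> c) u"
  obtains a l where "u = a @ (if l then [c] else [])" "a = [] \<or> last a \<noteq> c"
proof (cases "u \<noteq> [] \<and> last u = c")
  case True
  then have u: "u = butlast u @ [c]"
    by (metis append_butlast_last_id)
  show ?thesis
  proof (rule that[of "butlast u" True])
    show "u = butlast u @ (if True then [c] else [])"
      using u by simp
    show "butlast u = [] \<or> last (butlast u) \<noteq> c"
      using assms by (subst (asm) u) (auto simp: successively_append_iff)
  qed
next
  case False
  then show ?thesis
    by (intro that[of u False]) auto
qed

lemma split_leading:
  assumes "successively (\<lambda>x y. x \<noteq> c \<or> y \<noteq> c) s"
  obtains b r where "s = (if r then [c] else []) @ b" "b = [] \<or> hd b \<noteq> c"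
proof -
  have "(\<lambda>x y. y \<noteq> c \<or> x \<noteq> c) = (\<lambda>x y. x \<noteq> c \<or> y \<noteq> c)"
    by auto
  with assms have "successively (\<lambda>x y. x \<noteq> c \<or> y \<noteq> c) (rev s)"
    by (simp only: successively_rev)
  then obtain a r where "rev s = a @ (if r then [c] else [])" "a = [] \<or> last a \<noteq> c"
    by (rule split_trailing)
  then show ?thesis
    by (intro that[of r "rev a"]) (auto simp: rev_swap hd_rev)
qed

lemma ins_top_in_seg_perms_iff:
  assumes "Suc k \<notin> set a" "Suc k \<notin> set b" "l \<or> a \<noteq> []" "r \<or> b \<noteq> []"
    and a_end: "a = [] \<or> last a \<noteq> 0" and b_start: "b = [] \<or> hd b \<noteq> 0"
  shows "ins_top (Suc k) ((a, b), l, r) \<in> seg_perms (Suc k) \<longleftrightarrow> a @ 0 # b \<in> seg_perms k"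
proof -
  define x where "x = ins_top (Suc k) ((a, b), l, r)"
  define S where "S = set a \<union> set b \<union> (if l \<or> r then {0} else {})"
  have hd_x: "hd x = 0 \<longleftrightarrow> (a \<noteq> [] \<longrightarrow> hd a = 0)"
    using assms(3) by (cases a) (auto simp: x_def ins_top_def)
  have last_x: "last x = 0 \<longleftrightarrow> (b \<noteq> [] \<longrightarrow> last b = 0)"
    using assms(4) by (auto simp: x_def ins_top_def)
  have succ_x: "successively (\<lambda>x y. x \<noteq> 0 \<or> y \<noteq> 0) x \<longleftrightarrow>
      successively (\<lambda>x y. x \<noteq> 0 \<or> y \<noteq> 0) a \<and> successively (\<lambda>x y. x \<noteq> 0 \<or> y \<noteq> 0) b"
    using a_end b_start by (auto simp: x_def ins_top_def successively_append_iff successively_Cons)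
  have succ_w: "successively (\<lambda>x y. x \<noteq> 0 \<or> y \<noteq> 0) (a @ 0 # b) \<longleftrightarrow>
      successively (\<lambda>x y. x \<noteq> 0 \<or> y \<noteq> 0) a \<and> successively (\<lambda>x y. x \<noteq> 0 \<or> y \<noteq> 0) b"
    using a_end b_start by (auto simp: successively_append_iff successively_Cons)
  have dist_x: "distinct (filter (\<lambda>x. x \<noteq> 0) x) \<longleftrightarrow> distinct (filter (\<lambda>x. x \<noteq> 0) (a @ 0 # b))"
    using assms(1,2) by (auto simp: x_def ins_top_def)
  have set_x: "set x = insert (Suc k) S" and set_w: "set (a @ 0 # b) = insert 0 (set a \<union> set b)"
    by (auto simp: x_def ins_top_def S_def)
  have hd_w: "hd (a @ 0 # b) = 0 \<longleftrightarrow> (a \<noteq> [] \<longrightarrow> hd a = 0)"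
    by (cases a) auto
  have last_w: "last (a @ 0 # b) = 0 \<longleftrightarrow> (b \<noteq> [] \<longrightarrow> last b = 0)"
    by simp
  have "x \<noteq> []"
    by (simp add: x_def ins_top_def)
  have set_iff: "set x = {0..Suc k} \<longleftrightarrow> set (a @ 0 # b) = {0..k}" if "a \<noteq> [] \<longrightarrow> hd a = 0"
  proof -
    have "0 \<in> S"
      using that assms(3) by (cases a) (auto simp: S_def)
    then have "insert 0 (set a \<union> set b) = S"
      by (auto simp: S_def split: if_splits)
    moreover have "Suc k \<notin> S" "Suc k \<notin> {0..k}"
      using assms(1,2) by (auto simp: S_def)
    ultimately show ?thesis
      unfolding set_x set_w atLeast0_atMost_Suc by (simp add: insert_ident)
  qed
  show ?thesis
  proof (cases "a \<noteq> [] \<longrightarrow> hd a = 0")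
    case True
    with set_iff show ?thesis
      unfolding x_def[symmetric] seg_perms_def mem_Collect_eq
      using \<open>x \<noteq> []\<close> hd_x last_x succ_x dist_x hd_w last_w succ_w by simp
  next
    case False
    then show ?thesis
      unfolding x_def[symmetric] seg_perms_def mem_Collect_eq
      using hd_x hd_w by simp
  qed
qed

lemma mem_ins_choices:
  "((a, b), l, r) \<in> ins_choices w \<longleftrightarrow> w = a @ 0 # b \<and> (l \<or> a \<noteq> []) \<and> (r \<or> b \<noteq> [])"
  by (simp add: ins_choices_def splits_at_def)

lemma ins_top_mem_seg_perms:
  assumes "w \<in> seg_perms k" "((a, b), l, r) \<in> ins_choices w"
  shows "ins_top (Suc k) ((a, b), l, r) \<in> seg_perms (Suc k)"
proof -
  have w: "w = a @ 0 # b" and "l \<or> a \<noteq> []" "r \<or> b \<noteq> []"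
    using assms(2) by (simp_all add: mem_ins_choices)
  note split = seg_perms_splitD[OF assms(1) w]
  have "Suc k \<notin> set a" "Suc k \<notin> set b"
    using split(1,2) by auto
  moreover have "a = [] \<or> last a \<noteq> 0" "b = [] \<or> hd b \<noteq> 0"
    using split(3,4) by auto
  ultimately show ?thesis
    using ins_top_in_seg_perms_iff \<open>l \<or> a \<noteq> []\<close> \<open>r \<or> b \<noteq> []\<close> assms(1) w by simp
qed

lemma append_if_singleton_cancel:
  assumes "a1 = [] \<or> last a1 \<noteq> c" "a2 = [] \<or> last a2 \<noteq> c"
    and "a1 @ (if l1 then [c] else []) = a2 @ (if l2 then [c] else [])"
  shows "a1 = a2 \<and> l1 = l2"
  using assms by (cases l1; cases l2) auto

lemma if_singleton_append_cancel:
  assumes "b1 = [] \<or> hd b1 \<noteq> c" "b2 = [] \<or> hd b2 \<noteq> c"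
    and "(if r1 then [c] else []) @ b1 = (if r2 then [c] else []) @ b2"
  shows "b1 = b2 \<and> r1 = r2"
  using assms by (cases r1; cases r2) auto

lemma ins_top_inject:
  assumes "w1 \<in> seg_perms k" "((a1, b1), l1, r1) \<in> ins_choices w1"
    and "w2 \<in> seg_perms k" "((a2, b2), l2, r2) \<in> ins_choices w2"
    and eq: "ins_top (Suc k) ((a1, b1), l1, r1) = ins_top (Suc k) ((a2, b2), l2, r2)"
  shows "w1 = w2 \<and> ((a1, b1), l1, r1) = ((a2, b2), l2, r2)"
proof -
  have w1: "w1 = a1 @ 0 # b1" and w2: "w2 = a2 @ 0 # b2"
    using assms(2,4) by (simp_all add: mem_ins_choices)
  note split1 = seg_perms_splitD[OF assms(1) w1]
  note split2 = seg_perms_splitD[OF assms(3) w2]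
  have "Suc k \<notin> set (a1 @ (if l1 then [0] else []))" "Suc k \<notin> set ((if r1 then [0] else []) @ b1)"
    using split1(1,2) by auto
  moreover have "(a1 @ (if l1 then [0] else [])) @ Suc k # (if r1 then [0] else []) @ b1 =
      (a2 @ (if l2 then [0] else [])) @ Suc k # (if r2 then [0] else []) @ b2"
    using eq by (simp add: ins_top_def)
  ultimately have "a1 @ (if l1 then [0] else []) = a2 @ (if l2 then [0] else []) \<and>
      (if r1 then [0] else []) @ b1 = (if r2 then [0] else []) @ b2"
    by (rule append_Cons_eq_iff[THEN iffD1])
  then have "a1 = a2 \<and> l1 = l2" "b1 = b2 \<and> r1 = r2"
    using append_if_singleton_cancel[of a1 0 a2] if_singleton_append_cancel[of b1 0 b2]
      split1(3,4) split2(3,4) by auto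
  then show ?thesis
    using w1 w2 by simp
qed

lemma inj_on_ins_top: "inj_on (\<lambda>(w, c). ins_top (Suc k) c) (Sigma (seg_perms k) ins_choices)"
proof (rule inj_onI)
  fix x y
  assume "x \<in> Sigma (seg_perms k) ins_choices" "y \<in> Sigma (seg_perms k) ins_choices"
    and "(\<lambda>(w, c). ins_top (Suc k) c) x = (\<lambda>(w, c). ins_top (Suc k) c) y"
  moreover obtain w1 a1 b1 l1 r1 w2 a2 b2 l2 r2
    where "x = (w1, (a1, b1), l1, r1)" "y = (w2, (a2, b2), l2, r2)"
    by (metis prod.exhaust)
  ultimately show "x = y"
    using ins_top_inject[of w1 k a1 b1 l1 r1 w2 a2 b2 l2 r2] by simp
qed

lemma seg_perms_Suc_obtain_ins_top:
  assumes "x \<in> seg_perms (Suc k)"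
  obtains w c where "w \<in> seg_perms k" "c \<in> ins_choices w" "x = ins_top (Suc k) c"
proof -
  let ?N = "\<lambda>x y. x \<noteq> 0 \<or> y \<noteq> 0"
  have "Suc k \<in> set x"
    using assms by (simp add: seg_perms_def)
  then obtain u s where x: "x = u @ Suc k # s" and "Suc k \<notin> set u"
    by (meson split_list_first)
  have "Suc k \<notin> set s"
    using assms by (auto simp: seg_perms_def x)
  have "u \<noteq> []" "s \<noteq> []" "successively ?N u" "successively ?N s"
    using assms by (auto simp: seg_perms_def x successively_append_iff successively_Cons)
  obtain a l where u: "u = a @ (if l then [0] else [])" and a_end: "a = [] \<or> last a \<noteq> 0"
    using split_trailing[OF \<open>successively ?N u\<close>] by metis
  obtain b r where s: "s = (if r then [0] else []) @ b" and b_start: "b = [] \<or> hd b \<noteq> 0"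
    using split_leading[OF \<open>successively ?N s\<close>] by metis
  have "l \<or> a \<noteq> []" "r \<or> b \<noteq> []"
    using \<open>u \<noteq> []\<close> \<open>s \<noteq> []\<close> u s by auto
  moreover have x_ins: "x = ins_top (Suc k) ((a, b), l, r)"
    by (simp add: ins_top_def x u s)
  moreover have "Suc k \<notin> set a" "Suc k \<notin> set b"
    using \<open>Suc k \<notin> set u\<close> \<open>Suc k \<notin> set s\<close> u s by auto
  ultimately have "a @ 0 # b \<in> seg_perms k"
    using ins_top_in_seg_perms_iff[of k a b l r] a_end b_start assms by simp
  moreover have "((a, b), l, r) \<in> ins_choices (a @ 0 # b)"
    using \<open>l \<or> a \<noteq> []\<close> \<open>r \<or> b \<noteq> []\<close> by (simp add: mem_ins_choices)
  ultimately show ?thesis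
    using x_ins by (rule that)
qed

lemma bij_betw_ins_top:
  "bij_betw (\<lambda>(w, c). ins_top (Suc k) c) (Sigma (seg_perms k) ins_choices) (seg_perms (Suc k))"
proof (rule bij_betw_imageI)
  show "inj_on (\<lambda>(w, c). ins_top (Suc k) c) (Sigma (seg_perms k) ins_choices)"
    by (rule inj_on_ins_top)
  show "(\<lambda>(w, c). ins_top (Suc k) c) ` Sigma (seg_perms k) ins_choices = seg_perms (Suc k)"
  proof
    show "(\<lambda>(w, c). ins_top (Suc k) c) ` Sigma (seg_perms k) ins_choices \<subseteq> seg_perms (Suc k)"
      using ins_top_mem_seg_perms by fastforce
    show "seg_perms (Suc k) \<subseteq> (\<lambda>(w, c). ins_top (Suc k) c) ` Sigma (seg_perms k) ins_choices"
    proof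
      fix x assume "x \<in> seg_perms (Suc k)"
      then obtain w c where "w \<in> seg_perms k" "c \<in> ins_choices w" "x = ins_top (Suc k) c"
        by (rule seg_perms_Suc_obtain_ins_top)
      then show "x \<in> (\<lambda>(w, c). ins_top (Suc k) c) ` Sigma (seg_perms k) ins_choices"
        by (intro image_eqI[of _ _ "(w, c)"]) simp_all
    qed
  qed
qed

lemma seg_perms_0: "seg_perms 0 = {[0]}"
proof -
  have "w = [0]" if "w \<in> seg_perms 0" for w
  proof -
    from that have "\<forall>x\<in>set w. x = 0" "w \<noteq> []" "successively (\<lambda>x y. x \<noteq> 0 \<or> y \<noteq> 0) w"
      by (auto simp: seg_perms_def)
    then show ?thesis
      by (cases w rule: remdups_adj.cases) simp_all
  qed
  then show ?thesis
    by (auto simp: seg_perms_def)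
qed

lemma finite_ins_choices: "finite (ins_choices w)"
proof (rule finite_subset)
  show "ins_choices w \<subseteq> splits_at 0 w \<times> UNIV"
    by (auto simp: ins_choices_def)
  show "finite (splits_at 0 w \<times> (UNIV :: (bool \<times> bool) set))"
    by (simp add: finite_splits_at)
qed

lemma finite_seg_perms: "finite (seg_perms k)"
proof (induction k)
  case (Suc k)
  then have "finite (Sigma (seg_perms k) ins_choices)"
    by (simp add: finite_ins_choices)
  then show ?case
    using bij_betw_finite[OF bij_betw_ins_top] by simp
qed (simp add: seg_perms_0)

section \<open>Statistics of a single letter\<close>

definition below :: "nat \<Rightarrow> nat \<Rightarrow> bool" where
  "below v x \<longleftrightarrow> 0 < x \<and> x < v"

(* Treating the separator 0 as larger than every letter makes the statistics of a letter
   invariant under replacing a separator by a block of zeros and larger letters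
   (count_adj_collapse), which is what inserting a new maximum does to the old letters. *)
definition above :: "nat \<Rightarrow> nat \<Rightarrow> bool" where
  "above v x \<longleftrightarrow> x = 0 \<or> v < x"

definition occ_13_2 :: "nat list \<Rightarrow> nat \<Rightarrow> nat" where
  "occ_13_2 w v = count_adj (\<lambda>x y. below v x \<and> above v y) (takeWhile (\<lambda>x. x \<noteq> v) w)"

definition occ_2_31 :: "nat list \<Rightarrow> nat \<Rightarrow> nat" where
  "occ_2_31 w v = count_adj (\<lambda>x y. above v x \<and> below v y) (tl (dropWhile (\<lambda>x. x \<noteq> v) w))"

definition desc_top :: "nat list \<Rightarrow> nat \<Rightarrow> nat" where
  "desc_top w v = (case tl (dropWhile (\<lambda>x. x \<noteq> v) w) of [] \<Rightarrow> 0 | y # _ \<Rightarrow> of_bool (below v y))"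

definition seg_weight :: "'a::comm_semiring_1 \<Rightarrow> 'a \<Rightarrow> 'a \<Rightarrow> nat list \<Rightarrow> 'a" where
  "seg_weight p q t w = (\<Prod>v\<in>set w - {0}. p ^ occ_13_2 w v * q ^ occ_2_31 w v * t ^ desc_top w v)"

lemma
  assumes "v \<notin> set u"
  shows occ_13_2_split: "occ_13_2 (u @ v # s) v = count_adj (\<lambda>x y. below v x \<and> above v y) u"
    and occ_2_31_split: "occ_2_31 (u @ v # s) v = count_adj (\<lambda>x y. above v x \<and> below v y) s"
    and desc_top_split: "desc_top (u @ v # s) v = of_bool (s \<noteq> [] \<and> below v (hd s))"
proof -
  have "takeWhile (\<lambda>x. x \<noteq> v) (u @ v # s) = u" "tl (dropWhile (\<lambda>x. x \<noteq> v) (u @ v # s)) = s"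
    using assms by (induction u) auto
  then show "occ_13_2 (u @ v # s) v = count_adj (\<lambda>x y. below v x \<and> above v y) u"
    and "occ_2_31 (u @ v # s) v = count_adj (\<lambda>x y. above v x \<and> below v y) s"
    and "desc_top (u @ v # s) v = of_bool (s \<noteq> [] \<and> below v (hd s))"
    by (simp_all add: occ_13_2_def occ_2_31_def desc_top_def split: list.split)
qed

lemma letter_stats_ins_top_old:
  assumes "w \<in> seg_perms k" "((a, b), l, r) \<in> ins_choices w" "v \<in> set w" "v \<noteq> 0"
  defines "x \<equiv> ins_top (Suc k) ((a, b), l, r)"
  shows "occ_13_2 x v = occ_13_2 w v \<and> occ_2_31 x v = occ_2_31 w v \<and> desc_top x v = desc_top w v"
proof -
  have w: "w = a @ 0 # b"
    using assms(2) by (simp add: mem_ins_choices)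
  have "v \<le> k"
    using assms(1,3) by (auto simp: seg_perms_def)
  define z where "z = (if l then [0] else []) @ Suc k # (if r then [0] else [])"
  have x: "x = a @ z @ b"
    by (simp add: x_def z_def ins_top_def)
  have "z \<noteq> []"
    by (simp add: z_def)
  have z_like_0: "above v e \<and> \<not> below v e" if "e \<in> set z" for e
    using that \<open>v \<le> k\<close> by (auto simp: z_def above_def below_def split: if_splits)
  have collapse: "count_adj P (xs @ z @ ys) = count_adj P (xs @ 0 # ys)"
    if "P = (\<lambda>x y. below v x \<and> above v y) \<or> P = (\<lambda>x y. above v x \<and> below v y)" for P xs ys
    using that z_like_0 \<open>z \<noteq> []\<close>
    by (intro count_adj_collapse) (auto simp: above_def below_def)
  have "v \<in> set a \<or> v \<in> set b"
    using assms(3,4) w by auto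
  then show ?thesis
  proof
    assume "v \<in> set a"
    then obtain a1 a2 where a: "a = a1 @ v # a2" and "v \<notin> set a1"
      by (meson split_list_first)
    have "w = a1 @ v # (a2 @ 0 # b)" "x = a1 @ v # (a2 @ z @ b)"
      using w x a by simp_all
    moreover have "below v (hd (a2 @ z @ b)) \<longleftrightarrow> below v (hd (a2 @ 0 # b))"
      using z_like_0[of "hd z"] \<open>z \<noteq> []\<close> by (cases a2) (auto simp: below_def)
    ultimately show ?thesis
      using \<open>v \<notin> set a1\<close> collapse \<open>z \<noteq> []\<close>
      by (simp add: occ_13_2_split occ_2_31_split desc_top_split)
  next
    assume "v \<in> set b"
    then obtain b1 b2 where b: "b = b1 @ v # b2" and "v \<notin> set b1"
      by (meson split_list_first)
    have "v \<notin> set a"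
      using assms(1,4) w b by (auto simp: seg_perms_def)
    moreover have "v \<notin> set z"
      using \<open>v \<le> k\<close> assms(4) by (auto simp: z_def)
    moreover have "w = (a @ 0 # b1) @ v # b2" "x = (a @ z @ b1) @ v # b2"
      using w x b by simp_all
    ultimately show ?thesis
      using \<open>v \<notin> set b1\<close> assms(4) collapse
      by (simp add: occ_13_2_split occ_2_31_split desc_top_split del: append_assoc)
  qed
qed

lemma letter_stats_ins_top_new:
  assumes "w \<in> seg_perms k" "((a, b), l, r) \<in> ins_choices w"
  defines "x \<equiv> ins_top (Suc k) ((a, b), l, r)"
  shows "occ_13_2 x (Suc k) = count_list a 0 - of_bool (\<not> l)"
    and "occ_2_31 x (Suc k) = count_list b 0 - of_bool (\<not> r)"
    and "desc_top x (Suc k) = of_bool (\<not> r)"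
proof -
  have w: "w = a @ 0 # b" and "l \<or> a \<noteq> []" "r \<or> b \<noteq> []"
    using assms(2) by (simp_all add: mem_ins_choices)
  note split = seg_perms_splitD[OF assms(1) w]
  define u where "u = a @ (if l then [0] else [])"
  define s where "s = (if r then [0] else []) @ b"
  have x: "x = u @ Suc k # s"
    by (simp add: x_def u_def s_def ins_top_def)
  have small_u: "y \<le> k" if "y \<in> set u" for y
    using that split(1) by (auto simp: u_def split: if_splits)
  have small_s: "y \<le> k" if "y \<in> set s" for y
    using that split(2) by (auto simp: s_def split: if_splits)
  have "Suc k \<notin> set u"
    using small_u by fastforce
  have "x \<in> seg_perms (Suc k)"
    unfolding x_def using assms(1,2) by (rule ins_top_mem_seg_perms)
  then have "successively (\<lambda>x y. x \<noteq> 0 \<or> y \<noteq> 0) u" "successively (\<lambda>x y. x \<noteq> 0 \<or> y \<noteq> 0) s"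
    by (auto simp: seg_perms_def x successively_append_iff successively_Cons)
  have "u \<noteq> []" "hd u = 0" "s \<noteq> []" "last s = 0"
    using \<open>l \<or> a \<noteq> []\<close> \<open>r \<or> b \<noteq> []\<close> split(3,4) by (auto simp: u_def s_def hd_append)
  have "occ_13_2 x (Suc k) = count_adj (\<lambda>x y. x \<noteq> 0 \<and> y = 0) u"
    unfolding x occ_13_2_split[OF \<open>Suc k \<notin> set u\<close>]
    by (rule count_adj_cong) (auto simp: below_def above_def dest: small_u)
  also have "\<dots> = count_list u 0 - 1"
    using count_adj_enter_count_list[OF \<open>successively _ u\<close>] \<open>u \<noteq> []\<close> \<open>hd u = 0\<close> by simp
  finally show "occ_13_2 x (Suc k) = count_list a 0 - of_bool (\<not> l)"
    by (simp add: u_def)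
  have "occ_2_31 x (Suc k) = count_adj (\<lambda>x y. x = 0 \<and> y \<noteq> 0) s"
    unfolding x occ_2_31_split[OF \<open>Suc k \<notin> set u\<close>]
    by (rule count_adj_cong) (auto simp: below_def above_def dest: small_s)
  also have "\<dots> = count_list s 0 - 1"
    using count_adj_leave_count_list[OF \<open>successively _ s\<close>] \<open>s \<noteq> []\<close> \<open>last s = 0\<close> by simp
  finally show "occ_2_31 x (Suc k) = count_list b 0 - of_bool (\<not> r)"
    by (simp add: s_def)
  have "hd b \<le> k" if "b \<noteq> []"
    using small_s[of "hd b"] that by (simp add: s_def)
  then show "desc_top x (Suc k) = of_bool (\<not> r)"
    unfolding x desc_top_split[OF \<open>Suc k \<notin> set u\<close>]
    using \<open>r \<or> b \<noteq> []\<close> split(4) by (auto simp: s_def below_def)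
qed

lemma seg_weight_ins_top:
  assumes "w \<in> seg_perms k" "((a, b), l, r) \<in> ins_choices w"
  shows "seg_weight p q t (ins_top (Suc k) ((a, b), l, r)) = seg_weight p q t w *
    (p ^ (count_list a 0 - of_bool (\<not> l)) * q ^ (count_list b 0 - of_bool (\<not> r)) * t ^ of_bool (\<not> r))"
proof -
  let ?x = "ins_top (Suc k) ((a, b), l, r)"
  let ?f = "\<lambda>w v. p ^ occ_13_2 w v * q ^ occ_2_31 w v * t ^ desc_top w v"
  have w: "w = a @ 0 # b"
    using assms(2) by (simp add: mem_ins_choices)
  have "set ?x - {0} = insert (Suc k) (set w - {0})"
    using w by (auto simp: ins_top_def)
  moreover have "Suc k \<notin> set w - {0}"
    using assms(1) by (auto simp: seg_perms_def)
  ultimately have "seg_weight p q t ?x = ?f ?x (Suc k) * (\<Prod>v\<in>set w - {0}. ?f ?x v)"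
    by (simp add: seg_weight_def)
  also have "(\<Prod>v\<in>set w - {0}. ?f ?x v) = seg_weight p q t w"
    unfolding seg_weight_def using letter_stats_ins_top_old[OF assms] by (intro prod.cong) auto
  finally show ?thesis
    using letter_stats_ins_top_new[OF assms] by (simp add: mult.commute)
qed

section \<open>The insertion recursion\<close>

definition pq_int :: "'a::comm_semiring_1 \<Rightarrow> 'a \<Rightarrow> nat \<Rightarrow> 'a" where
  "pq_int p q n = (\<Sum>i<n. p ^ i * q ^ (n - 1 - i))"

lemma pq_int_commute: "pq_int p q n = pq_int q p n"
proof -
  have "pq_int q p n = (\<Sum>i<n. q ^ (n - Suc i) * p ^ (n - 1 - (n - Suc i)))"
    unfolding pq_int_def by (rule sum.nat_diff_reindex [symmetric])
  also have "\<dots> = pq_int p q n"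
    unfolding pq_int_def by (intro sum.cong) (auto simp: mult.commute)
  finally show ?thesis ..
qed

lemma sum_shifted_pq_int:
  "(\<Sum>i<z. if d \<le> i \<and> i + e < z then p ^ (i - d) * q ^ (z - 1 - e - i) else 0) = pq_int p q (z - (d + e))"
proof -
  let ?N = "z - (d + e)"
  have "(\<Sum>i<z. if d \<le> i \<and> i + e < z then p ^ (i - d) * q ^ (z - 1 - e - i) else 0) =
      (\<Sum>i\<in>{i \<in> {..<z}. d \<le> i \<and> i + e < z}. p ^ (i - d) * q ^ (z - 1 - e - i))"
    by (rule sum.inter_filter [symmetric]) simp
  also have "{i \<in> {..<z}. d \<le> i \<and> i + e < z} = {0 + d..<?N + d}"
    by auto
  also have "(\<Sum>i\<in>{0 + d..<?N + d}. p ^ (i - d) * q ^ (z - 1 - e - i)) = pq_int p q ?N"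
    unfolding sum.shift_bounds_nat_ivl pq_int_def atLeast0LessThan by (intro sum.cong) (simp_all add: ac_simps)
  finally show ?thesis .
qed

definition ins_factor :: "'a::comm_semiring_1 \<Rightarrow> 'a \<Rightarrow> 'a \<Rightarrow> (nat \<Rightarrow> 'a) \<Rightarrow> nat \<Rightarrow> bool \<Rightarrow> bool \<Rightarrow> nat \<Rightarrow> 'a"
  where "ins_factor p q t G z l r i =
    (if of_bool (\<not> l) \<le> i \<and> i + of_bool (\<not> r) < z
     then p ^ (i - of_bool (\<not> l)) * q ^ (z - 1 - of_bool (\<not> r) - i) else 0) *
    (t ^ of_bool (\<not> r) * G (z + of_bool l + of_bool r - 1))"

definition ins_transfer :: "'a::comm_semiring_1 \<Rightarrow> 'a \<Rightarrow> 'a \<Rightarrow> (nat \<Rightarrow> 'a) \<Rightarrow> nat \<Rightarrow> 'a" where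
  "ins_transfer p q t G z = (\<Sum>(l, r)\<in>UNIV.
     pq_int p q (z - (of_bool (\<not> l) + of_bool (\<not> r))) * (t ^ of_bool (\<not> r) * G (z + of_bool l + of_bool r - 1)))"

lemma sum_ins_factor: "(\<Sum>(l, r)\<in>UNIV. \<Sum>i<z. ins_factor p q t G z l r i) = ins_transfer p q t G z"
  unfolding ins_factor_def ins_transfer_def sum_distrib_right [symmetric] sum_shifted_pq_int ..

lemma ins_transfer_commute: "ins_transfer p q t G z = ins_transfer q p t G z"
  by (simp add: ins_transfer_def pq_int_commute)

lemma count_list_ins_top:
  "count_list (ins_top m ((a, b), l, r)) 0 =
     count_list a 0 + count_list b 0 + of_bool l + of_bool r + of_bool (m = 0)"
  by (simp add: ins_top_def)

lemma ins_top_summand: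
  assumes "w \<in> seg_perms k" "(a, b) \<in> splits_at 0 w"
  shows "(if (l \<or> a \<noteq> []) \<and> (r \<or> b \<noteq> [])
      then seg_weight p q t (ins_top (Suc k) ((a, b), l, r)) * G (count_list (ins_top (Suc k) ((a, b), l, r)) 0)
      else 0) = seg_weight p q t w * ins_factor p q t G (count_list w 0) l r (count_list a 0)"
proof -
  have w: "w = a @ 0 # b"
    using assms(2) by (simp add: splits_at_def)
  note split = seg_perms_splitD[OF assms(1) w]
  have "a \<noteq> [] \<longleftrightarrow> count_list a 0 \<noteq> 0" "b \<noteq> [] \<longleftrightarrow> count_list b 0 \<noteq> 0"
    using split(3,4) by (auto simp: count_list_0_iff dest: hd_in_set last_in_set)
  moreover have "count_list w 0 = count_list a 0 + count_list b 0 + 1"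
    by (simp add: w)
  ultimately show ?thesis
    using seg_weight_ins_top[OF assms(1), of a b l r p q t]
    by (auto simp: ins_factor_def mem_ins_choices w count_list_ins_top mult_ac)
qed

lemma sum_ins_choices:
  assumes "w \<in> seg_perms k"
  shows "(\<Sum>c\<in>ins_choices w. seg_weight p q t (ins_top (Suc k) c) * G (count_list (ins_top (Suc k) c) 0))
    = seg_weight p q t w * ins_transfer p q t G (count_list w 0)"
proof -
  let ?F = "\<lambda>c. seg_weight p q t (ins_top (Suc k) c) * G (count_list (ins_top (Suc k) c) 0)"
  let ?adm = "\<lambda>ab lr. (fst lr \<or> fst ab \<noteq> []) \<and> (snd lr \<or> snd ab \<noteq> [])"
  let ?g = "\<lambda>lr i. ins_factor p q t G (count_list w 0) (fst lr) (snd lr) i"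
  have choices: "ins_choices w = {c \<in> splits_at 0 w \<times> UNIV. ?adm (fst c) (snd c)}"
    by (auto simp: ins_choices_def)
  have "(\<Sum>c\<in>ins_choices w. ?F c) = (\<Sum>c\<in>splits_at 0 w \<times> UNIV. if ?adm (fst c) (snd c) then ?F c else 0)"
    unfolding choices by (rule sum.inter_filter) (simp add: finite_splits_at)
  also have "\<dots> = (\<Sum>ab\<in>splits_at 0 w. \<Sum>lr\<in>UNIV. if ?adm ab lr then ?F (ab, lr) else 0)"
    unfolding sum.cartesian_product by (intro sum.cong) auto
  also have "\<dots> = (\<Sum>lr\<in>UNIV. \<Sum>ab\<in>splits_at 0 w. if ?adm ab lr then ?F (ab, lr) else 0)"
    by (rule sum.swap)
  also have "\<dots> = (\<Sum>lr\<in>UNIV. \<Sum>ab\<in>splits_at 0 w. seg_weight p q t w * ?g lr ((\<lambda>(a, b). count_list a 0) ab))"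
  proof (intro sum.cong refl)
    fix lr :: "bool \<times> bool" and ab assume "ab \<in> splits_at 0 w"
    moreover obtain a b l r where "ab = (a, b)" "lr = (l, r)"
      by (metis prod.exhaust)
    ultimately show "(if ?adm ab lr then ?F (ab, lr) else 0) = seg_weight p q t w * ?g lr ((\<lambda>(a, b). count_list a 0) ab)"
      using ins_top_summand[OF assms, of a b l r p q t G] by (simp only: fst_conv snd_conv prod.case)
  qed
  also have "\<dots> = (\<Sum>lr\<in>UNIV. seg_weight p q t w * (\<Sum>ab\<in>splits_at 0 w. ?g lr ((\<lambda>(a, b). count_list a 0) ab)))"
    by (simp add: sum_distrib_left)
  also have "\<dots> = (\<Sum>lr\<in>UNIV. seg_weight p q t w * (\<Sum>i<count_list w 0. ?g lr i))"
    by (simp add: sum.reindex_bij_betw [OF bij_betw_splits_at])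
  also have "\<dots> = seg_weight p q t w * ins_transfer p q t G (count_list w 0)"
    using sum_ins_factor[of p q t G "count_list w 0"] by (simp add: case_prod_beta flip: sum_distrib_left)
  finally show ?thesis .
qed

lemma sum_seg_perms_Suc:
  "(\<Sum>w\<in>seg_perms (Suc k). seg_weight p q t w * G (count_list w 0)) =
   (\<Sum>w\<in>seg_perms k. seg_weight p q t w * ins_transfer p q t G (count_list w 0))"
proof -
  let ?F = "\<lambda>w. seg_weight p q t w * G (count_list w 0)"
  have "(\<Sum>w\<in>seg_perms (Suc k). ?F w) =
      (\<Sum>x\<in>Sigma (seg_perms k) ins_choices. ?F ((\<lambda>(w, c). ins_top (Suc k) c) x))"
    by (rule sum.reindex_bij_betw [OF bij_betw_ins_top, symmetric])
  also have "\<dots> = (\<Sum>w\<in>seg_perms k. \<Sum>c\<in>ins_choices w. ?F (ins_top (Suc k) c))"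
    by (subst sum.Sigma) (simp_all add: finite_seg_perms finite_ins_choices case_prod_beta)
  also have "\<dots> = (\<Sum>w\<in>seg_perms k. seg_weight p q t w * ins_transfer p q t G (count_list w 0))"
    by (intro sum.cong refl sum_ins_choices)
  finally show ?thesis .
qed

lemma sum_seg_perms_commute:
  "(\<Sum>w\<in>seg_perms k. seg_weight p q t w * G (count_list w 0)) =
   (\<Sum>w\<in>seg_perms k. seg_weight q p t w * G (count_list w 0))"
proof (induction k arbitrary: G)
  case 0
  then show ?case
    by (simp add: seg_perms_0 seg_weight_def)
next
  case (Suc k)
  then show ?case
    by (simp add: sum_seg_perms_Suc ins_transfer_commute [of p q])
qed

section \<open>Framed permutations\<close>

lemma pat_13_2_eq_sum:
  "pat_13_2 \<pi> = (\<Sum>j<length \<pi>. card {i. Suc i < j \<and> \<pi> ! i < \<pi> ! j \<and> \<pi> ! j < \<pi> ! Suc i})"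
proof -
  let ?n = "length \<pi>"
  let ?B = "\<lambda>j. {i. Suc i < j \<and> \<pi> ! i < \<pi> ! j \<and> \<pi> ! j < \<pi> ! Suc i}"
  let ?f = "\<lambda>(j, i). (i + 2, j + 1)"
  have "{(i, j). 2 \<le> i \<and> i < j \<and> j \<le> ?n \<and> \<pi> ! (i - 2) < \<pi> ! (j - 1) \<and> \<pi> ! (j - 1) < \<pi> ! (i - 1)}
      = ?f ` (SIGMA j:{..<?n}. ?B j)"
  proof (intro set_eqI iffI)
    fix x
    assume "x \<in> {(i, j). 2 \<le> i \<and> i < j \<and> j \<le> ?n \<and> \<pi> ! (i - 2) < \<pi> ! (j - 1) \<and> \<pi> ! (j - 1) < \<pi> ! (i - 1)}"
    then obtain i j where x: "x = (i, j)" "2 \<le> i" "i < j" "j \<le> ?n"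
      "\<pi> ! (i - 2) < \<pi> ! (j - 1)" "\<pi> ! (j - 1) < \<pi> ! (i - 1)"
      by auto
    then have "(j - 1, i - 2) \<in> (SIGMA j:{..<?n}. ?B j)"
      by (auto simp: Suc_diff_Suc numeral_2_eq_2)
    moreover have "x = ?f (j - 1, i - 2)"
      using x by auto
    ultimately show "x \<in> ?f ` (SIGMA j:{..<?n}. ?B j)"
      by blast
  qed auto
  moreover have "inj_on ?f (SIGMA j:{..<?n}. ?B j)"
    by (auto simp: inj_on_def)
  moreover have "finite (?B j)" for j
    by (rule finite_subset[of _ "{..<j}"]) auto
  ultimately show ?thesis
    unfolding pat_13_2_def by (simp add: card_image)
qed

lemma pat_2_31_eq_sum:
  "pat_2_31 \<pi> = (\<Sum>j<length \<pi>. card {i. j < i \<and> Suc i < length \<pi> \<and> \<pi> ! Suc i < \<pi> ! j \<and> \<pi> ! j < \<pi> ! i})"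
proof -
  let ?n = "length \<pi>"
  let ?B = "\<lambda>j. {i. j < i \<and> Suc i < ?n \<and> \<pi> ! Suc i < \<pi> ! j \<and> \<pi> ! j < \<pi> ! i}"
  let ?f = "\<lambda>(j, i). (j + 1, i + 1)"
  have "{(i, j). 1 \<le> i \<and> i < j \<and> j \<le> ?n - 1 \<and> \<pi> ! j < \<pi> ! (i - 1) \<and> \<pi> ! (i - 1) < \<pi> ! (j - 1)}
      = ?f ` (SIGMA j:{..<?n}. ?B j)"
  proof (intro set_eqI iffI)
    fix x
    assume "x \<in> {(i, j). 1 \<le> i \<and> i < j \<and> j \<le> ?n - 1 \<and> \<pi> ! j < \<pi> ! (i - 1) \<and> \<pi> ! (i - 1) < \<pi> ! (j - 1)}"
    then obtain i j where x: "x = (i, j)" "1 \<le> i" "i < j" "j \<le> ?n - 1"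
      "\<pi> ! j < \<pi> ! (i - 1)" "\<pi> ! (i - 1) < \<pi> ! (j - 1)"
      by auto
    then have "(i - 1, j - 1) \<in> (SIGMA j:{..<?n}. ?B j)"
      by auto
    moreover have "x = ?f (i - 1, j - 1)"
      using x by auto
    ultimately show "x \<in> ?f ` (SIGMA j:{..<?n}. ?B j)"
      by blast
  qed auto
  moreover have "inj_on ?f (SIGMA j:{..<?n}. ?B j)"
    by (auto simp: inj_on_def)
  moreover have "finite (?B j)" for j
    by (rule finite_subset[of _ "{..<?n}"]) auto
  ultimately show ?thesis
    unfolding pat_2_31_def by (simp add: card_image)
qed

lemma des_eq_sum: "des \<pi> = (\<Sum>j<length \<pi>. of_bool (Suc j < length \<pi> \<and> \<pi> ! Suc j < \<pi> ! j))"
proof -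
  have "{i \<in> {1..length \<pi> - 1}. \<pi> ! (i - 1) > \<pi> ! i} =
      Suc ` ({..<length \<pi>} \<inter> {j. Suc j < length \<pi> \<and> \<pi> ! Suc j < \<pi> ! j})"
  proof (intro set_eqI iffI)
    fix i assume "i \<in> {i \<in> {1..length \<pi> - 1}. \<pi> ! (i - 1) > \<pi> ! i}"
    then show "i \<in> Suc ` ({..<length \<pi>} \<inter> {j. Suc j < length \<pi> \<and> \<pi> ! Suc j < \<pi> ! j})"
      by (intro image_eqI[of _ _ "i - 1"]) auto
  qed auto
  then show ?thesis
    by (simp add: des_def card_image)
qed

lemma frame_split_at_nth:
  assumes "j < length \<pi>"
  shows "0 # \<pi> @ [0] = (0 # take j \<pi>) @ \<pi> ! j # (drop (Suc j) \<pi> @ [0])"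
proof -
  have "(0 # take j \<pi>) @ \<pi> ! j # (drop (Suc j) \<pi> @ [0]) = 0 # (take j \<pi> @ \<pi> ! j # drop (Suc j) \<pi>) @ [0]"
    by simp
  then show ?thesis
    by (simp only: id_take_nth_drop[OF assms, symmetric])
qed

lemma nth_notin_set_take:
  assumes "distinct xs" "j < length xs"
  shows "xs ! j \<notin> set (take j xs)"
proof -
  have "distinct (take j xs @ xs ! j # drop (Suc j) xs)"
    using assms(1) by (simp only: id_take_nth_drop[OF assms(2), symmetric])
  then show ?thesis
    by simp
qed

lemma letter_stats_frame:
  assumes "distinct \<pi>" "0 \<notin> set \<pi>" "j < length \<pi>"
  shows "occ_13_2 (0 # \<pi> @ [0]) (\<pi> ! j) = card {i. Suc i < j \<and> \<pi> ! i < \<pi> ! j \<and> \<pi> ! j < \<pi> ! Suc i}"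
    and "occ_2_31 (0 # \<pi> @ [0]) (\<pi> ! j) =
      card {i. j < i \<and> Suc i < length \<pi> \<and> \<pi> ! Suc i < \<pi> ! j \<and> \<pi> ! j < \<pi> ! i}"
    and "desc_top (0 # \<pi> @ [0]) (\<pi> ! j) = of_bool (Suc j < length \<pi> \<and> \<pi> ! Suc j < \<pi> ! j)"
proof -
  let ?v = "\<pi> ! j"
  note w = frame_split_at_nth[OF assms(3)]
  have "?v \<in> set \<pi>"
    using assms(3) by (rule nth_mem)
  then have "?v \<noteq> 0"
    using assms(2) by metis
  with nth_notin_set_take[OF assms(1,3)] have v: "?v \<notin> set (0 # take j \<pi>)"
    by simp
  have nz_take: "0 < x" if "x \<in> set (take j \<pi>)" for x
    using that assms(2) by (metis in_set_takeD gr0I)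
  have nz_drop: "0 < x" if "x \<in> set (drop (Suc j) \<pi>)" for x
    using that assms(2) by (metis in_set_dropD gr0I)
  have "occ_13_2 (0 # \<pi> @ [0]) ?v = count_adj (\<lambda>x y. x < ?v \<and> ?v < y) (take j \<pi>)"
    unfolding w occ_13_2_split[OF v] count_adj_Cons
    by (auto simp: below_def above_def dest: nz_take intro!: count_adj_cong)
  also have "\<dots> = card {i. Suc i < j \<and> \<pi> ! i < ?v \<and> ?v < \<pi> ! Suc i}"
    unfolding count_adj_take using assms(3) by (intro arg_cong[where f = card]) auto
  finally show "occ_13_2 (0 # \<pi> @ [0]) ?v = card {i. Suc i < j \<and> \<pi> ! i < ?v \<and> ?v < \<pi> ! Suc i}" .
  have "occ_2_31 (0 # \<pi> @ [0]) ?v = count_adj (\<lambda>x y. ?v < x \<and> y < ?v) (drop (Suc j) \<pi>)"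
    unfolding w occ_2_31_split[OF v] count_adj_append
    by (auto simp: below_def above_def dest: nz_drop intro!: count_adj_cong)
  also have "\<dots> = card {i. j < i \<and> Suc i < length \<pi> \<and> \<pi> ! Suc i < ?v \<and> ?v < \<pi> ! i}"
    unfolding count_adj_drop by (intro arg_cong[where f = card]) auto
  finally show "occ_2_31 (0 # \<pi> @ [0]) ?v =
      card {i. j < i \<and> Suc i < length \<pi> \<and> \<pi> ! Suc i < ?v \<and> ?v < \<pi> ! i}" .
  have "0 < \<pi> ! Suc j" if "Suc j < length \<pi>"
    using assms(2) nth_mem[OF that] by (metis gr0I)
  then show "desc_top (0 # \<pi> @ [0]) ?v = of_bool (Suc j < length \<pi> \<and> \<pi> ! Suc j < ?v)"
    unfolding w desc_top_split[OF v] by (auto simp: below_def hd_append hd_drop_conv_nth)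
qed

lemma seg_weight_frame:
  assumes "distinct \<pi>" "0 \<notin> set \<pi>"
  shows "seg_weight p q t (0 # \<pi> @ [0]) = p ^ pat_13_2 \<pi> * q ^ pat_2_31 \<pi> * t ^ des \<pi>"
proof -
  let ?w = "0 # \<pi> @ [0]"
  let ?f = "\<lambda>v. p ^ occ_13_2 ?w v * q ^ occ_2_31 ?w v * t ^ desc_top ?w v"
  have "set ?w - {0} = set \<pi>"
    using assms(2) by auto
  then have "seg_weight p q t ?w = prod_list (map ?f \<pi>)"
    using assms(1) by (simp add: seg_weight_def prod.distinct_set_conv_list)
  also have "\<dots> = (\<Prod>j<length \<pi>. ?f (\<pi> ! j))"
    by (simp add: prod.list_conv_set_nth atLeast0LessThan)
  also have "\<dots> = p ^ pat_13_2 \<pi> * q ^ pat_2_31 \<pi> * t ^ des \<pi>"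
    unfolding pat_13_2_eq_sum pat_2_31_eq_sum des_eq_sum power_sum
    by (simp add: prod.distrib letter_stats_frame[OF assms])
  finally show ?thesis .
qed

lemma seg_perms_two_zeros_obtain_frame:
  assumes "w \<in> seg_perms n" "count_list w 0 = 2"
  obtains \<pi> where "\<pi> \<in> perms n" "w = 0 # \<pi> @ [0]"
proof -
  have w: "w \<noteq> []" "hd w = 0" "last w = 0" "distinct (filter (\<lambda>x. x \<noteq> 0) w)" "set w = {0..n}"
    using assms(1) by (auto simp: seg_perms_def)
  obtain w' where "w = 0 # w'"
    using w(1,2) by (cases w) auto
  moreover have "w' \<noteq> []"
    using assms(2) \<open>w = 0 # w'\<close> by auto
  ultimately obtain \<pi> where \<pi>: "w = 0 # \<pi> @ [0]"
    using w(3) by (metis append_butlast_last_id last_ConsR)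
  then have "0 \<notin> set \<pi>"
    using assms(2) by (simp add: count_list_0_iff [symmetric])
  then have "filter (\<lambda>x. x \<noteq> 0) \<pi> = \<pi>"
    by (metis (mono_tags, lifting) filter_True)
  then have "distinct \<pi>"
    using w(4) \<pi> by simp
  have "set \<pi> = insert 0 (set \<pi>) - {0}"
    using \<open>0 \<notin> set \<pi>\<close> by simp
  also have "insert 0 (set \<pi>) = {0..n}"
    using \<pi> w(5) by simp
  also have "{0..n} - {0} = {1..n}"
    by auto
  finally have "\<pi> \<in> perms n"
    using \<open>distinct \<pi>\<close> by (simp add: perms_def permutations_of_set_def)
  then show ?thesis
    using \<pi> by (rule that)
qed

lemma frame_mem_seg_perms:
  assumes "n \<ge> 1" "\<pi> \<in> perms n"
  shows "0 # \<pi> @ [0] \<in> seg_perms n" "count_list (0 # \<pi> @ [0]) 0 = 2"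
proof -
  have "distinct \<pi>" "set \<pi> = {1..n}"
    using assms(2) by (simp_all add: perms_def permutations_of_set_def)
  then have "0 \<notin> set \<pi>" "\<pi> \<noteq> []"
    using assms(1) by auto
  have "successively (\<lambda>x y. x \<noteq> 0 \<or> y \<noteq> 0) \<pi>"
    using \<open>0 \<notin> set \<pi>\<close> by (induction \<pi> rule: induct_list012) auto
  moreover have "hd \<pi> \<noteq> 0" "last \<pi> \<noteq> 0"
    using \<open>0 \<notin> set \<pi>\<close> \<open>\<pi> \<noteq> []\<close> by (metis hd_in_set, metis last_in_set)
  ultimately have "successively (\<lambda>x y. x \<noteq> 0 \<or> y \<noteq> 0) (0 # \<pi> @ [0])"
    using \<open>\<pi> \<noteq> []\<close> by (simp add: successively_append_iff successively_Cons hd_append)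
  moreover have "filter (\<lambda>x. x \<noteq> 0) \<pi> = \<pi>"
    using \<open>0 \<notin> set \<pi>\<close> by (metis (mono_tags, lifting) filter_True)
  moreover have "set (0 # \<pi> @ [0]) = {0..n}"
    using \<open>set \<pi> = {1..n}\<close> by auto
  ultimately show "0 # \<pi> @ [0] \<in> seg_perms n"
    using \<open>distinct \<pi>\<close> by (simp add: seg_perms_def insert_absorb)
  show "count_list (0 # \<pi> @ [0]) 0 = 2"
    using \<open>0 \<notin> set \<pi>\<close> by simp
qed

lemma frame_perms:
  assumes "n \<ge> 1"
  shows "{w \<in> seg_perms n. count_list w 0 = 2} = (\<lambda>\<pi>. 0 # \<pi> @ [0]) ` perms n"
proof (intro set_eqI iffI)
  fix w assume "w \<in> {w \<in> seg_perms n. count_list w 0 = 2}"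
  then have "w \<in> seg_perms n" "count_list w 0 = 2"
    by simp_all
  then obtain \<pi> where "\<pi> \<in> perms n" "w = 0 # \<pi> @ [0]"
    by (rule seg_perms_two_zeros_obtain_frame)
  then show "w \<in> (\<lambda>\<pi>. 0 # \<pi> @ [0]) ` perms n"
    by (intro image_eqI[of _ _ \<pi>])
next
  fix w assume "w \<in> (\<lambda>\<pi>. 0 # \<pi> @ [0]) ` perms n"
  then obtain \<pi> where "\<pi> \<in> perms n" "w = 0 # \<pi> @ [0]"
    by auto
  then show "w \<in> {w \<in> seg_perms n. count_list w 0 = 2}"
    using frame_mem_seg_perms[OF assms, of \<pi>] by simp
qed

lemma A_poly_eq_sum_seg_perms:
  assumes "n \<ge> 1"
  shows "A_poly n p q t = (\<Sum>w\<in>seg_perms n. seg_weight p q t w * of_bool (count_list w 0 = 2))"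
proof -
  have "A_poly n p q t = (\<Sum>\<pi>\<in>perms n. seg_weight p q t (0 # \<pi> @ [0]))"
    unfolding A_poly_def
    by (intro sum.cong refl) (simp add: seg_weight_frame perms_def permutations_of_set_def)
  also have "\<dots> = (\<Sum>w\<in>(\<lambda>\<pi>. 0 # \<pi> @ [0]) ` perms n. seg_weight p q t w)"
    by (simp add: sum.reindex inj_on_def)
  also have "\<dots> = (\<Sum>w\<in>{w \<in> seg_perms n. count_list w 0 = 2}. seg_weight p q t w)"
    by (simp only: frame_perms[OF assms])
  also have "\<dots> = (\<Sum>w\<in>seg_perms n. seg_weight p q t w * of_bool (count_list w 0 = 2))"
    by (subst sum.inter_filter[OF finite_seg_perms]) (auto intro: sum.cong)
  finally show ?thesis .
qed

theorem proposition5p2: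
  fixes n :: nat and p q t :: "'a::comm_semiring_1"
  shows "A_poly n p q t = A_poly n q p t"
proof (cases "n = 0")
  case True
  then show ?thesis
    by (simp add: A_poly_def perms_def pat_13_2_eq_sum pat_2_31_eq_sum des_eq_sum)
next
  case False
  then have "n \<ge> 1"
    by simp
  show ?thesis
    unfolding A_poly_eq_sum_seg_perms[OF \<open>n \<ge> 1\<close>]
    by (rule sum_seg_perms_commute[where G = "\<lambda>z. of_bool (z = 2)"])
qed

end
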